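(* For $n\ge1$, $\left|\Pi_n\wr C_2(1^11^2,1^21^1)\right|=\sum_{k=0}^n 2^k \begin{Bmatrix} n\\ k\end{Bmatrix}$, where $\begin{Bmatrix} n\\ k\end{Bmatrix}$ is a Stirling number of the second kind.
   Context: For $n\ge0$ let $[n]=\{1,\dots,n\}$. A $2$-colored set partition of $[n]$ is a set partition of $[n]$ together with an assignment of a color from $\{1,2\}$ to each element; $\Pi_n\wr C_2$ is the set of these. For a set $S$ of patterns, $\Pi_n\wr C_2(S)$ is the set of such colored partitions avoiding every pattern in $S$ in the pattern sense. For the patterns used here: $\sigma$ contains $1^11^2$ iff there are $i<j$ in the same block with $i$ colored $1$ and $j$ colored $2$; $\sigma$ contains $1^21^1$ iff there are $i<j$ in the same block with $i$ colored $2$ and $j$ colored $1$. *)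

theory Defs
  imports Main "HOL-Library.Disjoint_Sets" "HOL-Library.FuncSet" "HOL-Combinatorics.Stirling"
begin

definition colored_partitions :: "nat \<Rightarrow> (nat set set \<times> (nat \<Rightarrow> nat)) set" where
  "colored_partitions n =
     {(P, c). partition_on {1..n} P \<and> c \<in> {1..n} \<rightarrow>\<^sub>E {1::nat, 2}}"

text \<open>Containment of the pattern 1^1 1^2: i<j in the same block, i colored 1, j colored 2.\<close>
definition contains_11_12 :: "nat set set \<times> (nat \<Rightarrow> nat) \<Rightarrow> bool" where
  "contains_11_12 \<sigma> = (\<exists>B\<in>fst \<sigma>. \<exists>i\<in>B. \<exists>j\<in>B. i < j \<and> snd \<sigma> i = 1 \<and> snd \<sigma> j = 2)"

definition contains_12_11 :: "nat set set \<times> (nat \<Rightarrow> nat) \<Rightarrow> bool" where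
  "contains_12_11 \<sigma> = (\<exists>B\<in>fst \<sigma>. \<exists>i\<in>B. \<exists>j\<in>B. i < j \<and> snd \<sigma> i = 2 \<and> snd \<sigma> j = 1)"

end

theory Submission
  imports Defs
begin

text \<open>A colored partition avoids both patterns exactly when every block is monochromatic, so
  a partition with k blocks carries 2^k admissible colorings. Summing over partitions grouped by
  their number of blocks gives the formula, once one knows that the partitions of an n-set into
  k blocks are counted by the Stirling number. The latter follows from the usual recursion:
  a partition of insert a A either has the singleton block {a}, or arises from a partition
  of A by putting a into one of its blocks.\<close>

lemma partition_on_Diff_block:
  "partition_on A P \<Longrightarrow> B \<in> P \<Longrightarrow> partition_on (A - B) (P - {B})"
  by (auto simp: partition_on_def pairwise_def disjnt_def)

lemma partition_on_block_subset: "partition_on A P \<Longrightarrow> B \<in> P \<Longrightarrow> B \<subseteq> A"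
  by (auto dest: partition_onD1)

lemma card_partition_on_le:
  assumes "finite A" "partition_on A P"
  shows "card P \<le> card A"
proof -
  have blocks: "finite B" "card B \<ge> 1" if "B \<in> P" for B
    using that assms partition_onD3[OF assms(2)] partition_on_block_subset[OF assms(2)]
    by (auto intro: finite_subset simp: Suc_le_eq card_gt_0_iff)
  have "card P = (\<Sum>B\<in>P. 1)" by simp
  also have "\<dots> \<le> (\<Sum>B\<in>P. card B)" using blocks by (intro sum_mono) auto
  also have "\<dots> = card A" using product_partition[OF assms(2)] blocks by simp
  finally show ?thesis .
qed

lemma partitions_with_singleton_block:
  assumes "a \<notin> A" "finite A"
  shows "{Q. partition_on (insert a A) Q \<and> card Q = Suc k \<and> {a} \<in> Q}
       = insert {a} ` {P. partition_on A P \<and> card P = k}" (is "?L = ?R")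
proof
  show "?L \<subseteq> ?R"
  proof
    fix Q assume Q: "Q \<in> ?L"
    then have "partition_on (insert a A - {a}) (Q - {{a}})"
      by (blast intro: partition_on_Diff_block)
    moreover have "finite Q" using Q card.infinite by fastforce
    ultimately show "Q \<in> ?R" using Q assms(1)
      by (auto simp: image_iff intro!: exI[of _ "Q - {{a}}"])
  qed
  show "?R \<subseteq> ?L"
  proof
    fix Q assume "Q \<in> ?R"
    then obtain P where P: "partition_on A P" "card P = k" and Q: "Q = insert {a} P" by auto
    have "{a} \<notin> P" using partition_on_block_subset[OF P(1)] assms(1) by auto
    then have "card Q = Suc k" using Q P finite_elements[OF assms(2) P(1)] by simp
    moreover have "partition_on (insert a A) Q" unfolding Q
      using P(1) assms(1) by (subst partition_on_insert) (auto simp: disjnt_def dest: partition_onD1)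
    ultimately show "Q \<in> ?L" using Q by auto
  qed
qed

lemma card_partitions_with_singleton_block:
  assumes "a \<notin> A" "finite A"
  shows "card {Q. partition_on (insert a A) Q \<and> card Q = Suc k \<and> {a} \<in> Q}
       = card {P. partition_on A P \<and> card P = k}"
proof -
  have "inj_on (insert {a}) {P. partition_on A P \<and> card P = k}"
  proof (rule inj_onI)
    fix P P'
    assume "P \<in> {P. partition_on A P \<and> card P = k}" "P' \<in> {P. partition_on A P \<and> card P = k}"
      and "insert {a} P = insert {a} P'"
    moreover have "{a} \<notin> P" "{a} \<notin> P'"
      using calculation(1,2) assms(1) partition_on_block_subset by blast+
    ultimately show "P = P'" by (simp add: insert_ident)
  qed
  then show ?thesis by (simp add: partitions_with_singleton_block[OF assms] card_image)
qed

definition insert_into_block :: "'a \<Rightarrow> 'a set set \<times> 'a set \<Rightarrow> 'a set set" where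
  "insert_into_block a = (\<lambda>(P, B). insert (insert a B) (P - {B}))"

lemma inj_on_insert_into_block:
  assumes "a \<notin> A"
  shows "inj_on (insert_into_block a) (SIGMA P:{P. partition_on A P}. P)"
proof (rule inj_onI, clarsimp)
  fix P B P' B'
  assume P: "partition_on A P" "B \<in> P" and P': "partition_on A P'" "B' \<in> P'"
    and eq: "insert_into_block a (P, B) = insert_into_block a (P', B')"
  have a_P: "a \<notin> X" if "X \<in> P" for X using partition_on_block_subset[OF P(1) that] assms by blast
  have a_P': "a \<notin> X" if "X \<in> P'" for X using partition_on_block_subset[OF P'(1) that] assms by blast
  have eq': "insert (insert a B) (P - {B}) = insert (insert a B') (P' - {B'})"
    using eq by (simp add: insert_into_block_def)
  have "insert a B \<notin> P' - {B'}" using a_P' by blast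
  then have "insert a B = insert a B'" using eq' by blast
  then have "B = B'" using a_P[OF P(2)] a_P'[OF P'(2)] by (metis insert_ident)
  have "P - {B} = insert (insert a B) (P - {B}) - {insert a B}" using a_P by blast
  also have "\<dots> = P' - {B'}" using eq' \<open>B = B'\<close> a_P' by blast
  finally have "P - {B} = P' - {B'}" .
  with \<open>B = B'\<close> show "P = P' \<and> B = B'" using P(2) P'(2) by blast
qed

lemma partition_on_insert_into_block:
  assumes "a \<notin> A" "finite A" "partition_on A P" "B \<in> P"
  shows "partition_on (insert a A) (insert_into_block a (P, B))"
    and "card (insert_into_block a (P, B)) = card P"
    and "{a} \<notin> insert_into_block a (P, B)"
proof -
  have a_P: "a \<notin> X" if "X \<in> P" for X using partition_on_block_subset[OF assms(3) that] assms(1) by blast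
  have "disjnt (insert a B) (\<Union>(P - {B}))"
    using assms(3,4) a_P by (auto simp: partition_on_def pairwise_def disjnt_def)
  moreover have "insert a A - insert a B = A - B" using assms(1) by blast
  ultimately show "partition_on (insert a A) (insert_into_block a (P, B))"
    using partition_on_Diff_block[OF assms(3,4)] partition_on_block_subset[OF assms(3,4)]
    by (simp add: insert_into_block_def partition_on_insert subset_insertI2)
  have "insert a B \<notin> P - {B}" using a_P by blast
  then have "card (insert_into_block a (P, B)) = Suc (card (P - {B}))"
    using finite_elements[OF assms(2,3)] by (simp add: insert_into_block_def)
  also have "\<dots> = card P" using assms(4) finite_elements[OF assms(2,3)] card_Suc_Diff1 by metis
  finally show "card (insert_into_block a (P, B)) = card P" .
  have "{a} \<notin> P" using a_P by blast
  moreover have "insert a B \<noteq> {a}"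
    using a_P[OF assms(4)] partition_onD3[OF assms(3)] assms(4) by (auto simp: subset_singleton_iff)
  ultimately show "{a} \<notin> insert_into_block a (P, B)" by (auto simp: insert_into_block_def)
qed

lemma partition_on_remove_from_block:
  assumes "a \<notin> A" "finite A" "partition_on (insert a A) Q" "{a} \<notin> Q"
  obtains P B where "partition_on A P" "B \<in> P" "card P = card Q" "insert_into_block a (P, B) = Q"
proof -
  obtain X where X: "X \<in> Q" "a \<in> X" using partition_onD1[OF assms(3)] by blast
  define B where "B = X - {a}"
  define P where "P = insert B (Q - {X})"
  have "B \<noteq> {}" using assms(4) X unfolding B_def by (metis insert_Diff)
  have disj: "disjnt B (\<Union>(Q - {X}))"
    using assms(3) X unfolding B_def by (auto simp: partition_on_def pairwise_def disjnt_def)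
  have "insert a A - X = A - B" using X assms(1) unfolding B_def by blast
  then have "partition_on (A - B) (Q - {X})" using partition_on_Diff_block[OF assms(3) X(1)] by simp
  moreover have "B \<subseteq> A" using partition_on_block_subset[OF assms(3) X(1)] unfolding B_def by blast
  ultimately have "partition_on A P"
    unfolding P_def partition_on_insert[OF disj] using \<open>B \<noteq> {}\<close> by blast
  have "B \<notin> Q - {X}" using disj \<open>B \<noteq> {}\<close> by (auto simp: disjnt_def)
  have "finite Q" using finite_elements[OF _ assms(3)] assms(2) by simp
  have "card P = Suc (card (Q - {X}))" using \<open>B \<notin> Q - {X}\<close> \<open>finite Q\<close> by (simp add: P_def)
  also have "\<dots> = card Q" using X(1) \<open>finite Q\<close> card_Suc_Diff1 by metis
  finally have "card P = card Q" .
  have "P - {B} = Q - {X}" using \<open>B \<notin> Q - {X}\<close> unfolding P_def by blast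
  moreover have "insert a B = X" using X unfolding B_def by blast
  ultimately have "insert_into_block a (P, B) = Q"
    using X(1) by (simp add: insert_into_block_def insert_absorb)
  with \<open>partition_on A P\<close> \<open>card P = card Q\<close> show ?thesis by (intro that) (auto simp: P_def)
qed

lemma partitions_without_singleton_block:
  assumes "a \<notin> A" "finite A"
  shows "{Q. partition_on (insert a A) Q \<and> card Q = k \<and> {a} \<notin> Q}
       = insert_into_block a ` (SIGMA P:{P. partition_on A P \<and> card P = k}. P)"
proof (intro equalityI subsetI)
  fix Q assume "Q \<in> {Q. partition_on (insert a A) Q \<and> card Q = k \<and> {a} \<notin> Q}"
  then have Q: "partition_on (insert a A) Q" "card Q = k" "{a} \<notin> Q" by auto
  obtain P B where "partition_on A P" "B \<in> P" "card P = card Q" "insert_into_block a (P, B) = Q"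
    by (rule partition_on_remove_from_block[OF assms Q(1,3)])
  then show "Q \<in> insert_into_block a ` (SIGMA P:{P. partition_on A P \<and> card P = k}. P)"
    using Q(2) by (intro rev_image_eqI[of "(P, B)"]) auto
next
  fix Q assume "Q \<in> insert_into_block a ` (SIGMA P:{P. partition_on A P \<and> card P = k}. P)"
  then show "Q \<in> {Q. partition_on (insert a A) Q \<and> card Q = k \<and> {a} \<notin> Q}"
    using partition_on_insert_into_block[OF assms] by auto
qed

lemma card_partitions_without_singleton_block:
  assumes "a \<notin> A" "finite A"
  shows "card {Q. partition_on (insert a A) Q \<and> card Q = k \<and> {a} \<notin> Q}
       = k * card {P. partition_on A P \<and> card P = k}"
proof -
  have "inj_on (insert_into_block a) (SIGMA P:{P. partition_on A P \<and> card P = k}. P)"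
    by (rule inj_on_subset[OF inj_on_insert_into_block[OF assms(1)]]) blast
  then have "card {Q. partition_on (insert a A) Q \<and> card Q = k \<and> {a} \<notin> Q}
      = card (SIGMA P:{P. partition_on A P \<and> card P = k}. P)"
    by (simp add: partitions_without_singleton_block[OF assms] card_image)
  also have "\<dots> = k * card {P. partition_on A P \<and> card P = k}"
    using assms(2) finitely_many_partition_on[of A]
    by (subst card_SigmaI) (auto simp: finite_elements finite_subset)
  finally show ?thesis .
qed

lemma card_partitions_on:
  assumes "finite A"
  shows "card {P. partition_on A P \<and> card P = k} = Stirling (card A) k"
  using assms
proof (induction A arbitrary: k rule: finite_induct)
  case empty
  show ?case by (cases k) (simp_all add: partition_on_empty Collect_conv_if)
next
  case (insert a A)
  show ?case
  proof (cases k)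
    case 0
    have "card Q \<noteq> 0" if "partition_on (insert a A) Q" for Q
      using that finite_elements[OF _ that] insert.hyps(1) partition_onD1[OF that]
      by (metis Union_empty card_0_eq finite_insert insert_not_empty)
    then have no_partitions: "{Q. partition_on (insert a A) Q \<and> card Q = 0} = {}" by blast
    show ?thesis unfolding 0 no_partitions using insert.hyps by simp
  next
    case (Suc m)
    have split: "{Q. partition_on (insert a A) Q \<and> card Q = k}
        = {Q. partition_on (insert a A) Q \<and> card Q = k \<and> {a} \<in> Q}
        \<union> {Q. partition_on (insert a A) Q \<and> card Q = k \<and> {a} \<notin> Q}" by blast
    have "finite {Q. partition_on (insert a A) Q \<and> card Q = k \<and> R Q}" for R
      using finitely_many_partition_on[of "insert a A"] insert.hyps(1) by (simp add: finite_subset)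
    then show ?thesis
      unfolding split using insert.hyps insert.IH
      by (subst card_Un_disjoint)
        (auto simp: Suc card_partitions_with_singleton_block card_partitions_without_singleton_block)
  qed
qed

lemma sum_partitions_on_by_card:
  assumes "finite A"
  shows "(\<Sum>P | partition_on A P. f (card P)) = (\<Sum>k=0..card A. of_nat (Stirling (card A) k) * f k)"
proof -
  have "(\<Sum>P | partition_on A P. f (card P))
      = (\<Sum>k=0..card A. \<Sum>P | partition_on A P \<and> card P = k. f (card P))"
    using sum.group[of "{P. partition_on A P}" "{0..card A}" card "\<lambda>P. f (card P)"] assms
    by (simp add: finitely_many_partition_on card_partition_on_le image_subset_iff)
  also have "\<dots> = (\<Sum>k=0..card A. of_nat (Stirling (card A) k) * f k)"
    using assms by (intro sum.cong refl) (simp add: card_partitions_on)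
  finally show ?thesis .
qed

definition block_of :: "'a set set \<Rightarrow> 'a \<Rightarrow> 'a set" where
  "block_of P x = (THE B. B \<in> P \<and> x \<in> B)"

lemma block_of_eq: "partition_on A P \<Longrightarrow> B \<in> P \<Longrightarrow> x \<in> B \<Longrightarrow> block_of P x = B"
  unfolding block_of_def
  by (rule the_equality) (auto simp: partition_on_def pairwise_def disjnt_def)

lemma block_of_mem:
  assumes "partition_on A P" "x \<in> A"
  shows "block_of P x \<in> P" "x \<in> block_of P x"
proof -
  obtain B where "B \<in> P" "x \<in> B" using assms partition_onD1 by blast
  then show "block_of P x \<in> P" "x \<in> block_of P x" using block_of_eq[OF assms(1)] by simp_all
qed

definition block_constant_maps :: "'a set \<Rightarrow> 'a set set \<Rightarrow> 'b set \<Rightarrow> ('a \<Rightarrow> 'b) set" where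
  "block_constant_maps A P C = {c \<in> A \<rightarrow>\<^sub>E C. \<forall>B\<in>P. \<forall>x\<in>B. \<forall>y\<in>B. c x = c y}"

lemma finite_block_constant_maps: "finite A \<Longrightarrow> finite C \<Longrightarrow> finite (block_constant_maps A P C)"
  unfolding block_constant_maps_def by (simp add: finite_PiE)

lemma bij_betw_block_constant_maps:
  assumes P: "partition_on A P"
  shows "bij_betw (\<lambda>g. restrict (g \<circ> block_of P) A) (P \<rightarrow>\<^sub>E C) (block_constant_maps A P C)"
proof (rule bij_betw_byWitness[where f' = "\<lambda>c. restrict (\<lambda>B. c (SOME x. x \<in> B)) P"])
  have some_in: "(SOME x. x \<in> B) \<in> B" if "B \<in> P" for B
    using that partition_onD3[OF P] by (metis ex_in_conv someI_ex)
  have block_mem: "x \<in> A" if "B \<in> P" "x \<in> B" for B x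
    using partition_on_block_subset[OF P] that by blast
  show "\<forall>g\<in>P \<rightarrow>\<^sub>E C. restrict (\<lambda>B. restrict (g \<circ> block_of P) A (SOME x. x \<in> B)) P = g"
    using some_in block_mem block_of_eq[OF P] by (force simp: PiE_def extensional_def)
  show "\<forall>c\<in>block_constant_maps A P C.
      restrict (restrict (\<lambda>B. c (SOME x. x \<in> B)) P \<circ> block_of P) A = c"
  proof (intro ballI ext)
    fix c x assume c: "c \<in> block_constant_maps A P C"
    show "restrict (restrict (\<lambda>B. c (SOME x. x \<in> B)) P \<circ> block_of P) A x = c x"
    proof (cases "x \<in> A")
      case True
      note B = block_of_mem[OF P True]
      have "c (SOME y. y \<in> block_of P x) = c x"
        using c B some_in[OF B(1)] unfolding block_constant_maps_def by blast
      with True B(1) show ?thesis by simp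
    next
      case False
      with c show ?thesis by (auto simp: block_constant_maps_def)
    qed
  qed
  show "(\<lambda>g. restrict (g \<circ> block_of P) A) ` (P \<rightarrow>\<^sub>E C) \<subseteq> block_constant_maps A P C"
    using block_of_mem[OF P] block_of_eq[OF P] block_mem
    by (auto simp: block_constant_maps_def)
  show "(\<lambda>c. restrict (\<lambda>B. c (SOME x. x \<in> B)) P) ` block_constant_maps A P C \<subseteq> P \<rightarrow>\<^sub>E C"
    using some_in block_mem by (auto simp: block_constant_maps_def)
qed

lemma card_block_constant_maps:
  assumes "finite A" "partition_on A P"
  shows "card (block_constant_maps A P C) = card C ^ card P"
proof -
  have "card (P \<rightarrow>\<^sub>E C) = card C ^ card P" using finite_elements[OF assms] by (simp add: card_PiE)
  then show ?thesis
    using bij_betw_same_card[OF bij_betw_block_constant_maps[OF assms(2), where C = C]] by simp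
qed

lemma avoids_patterns_iff_block_constant:
  assumes colors: "\<forall>x\<in>\<Union>P. c x \<in> {1, 2}"
  shows "\<not> contains_11_12 (P, c) \<and> \<not> contains_12_11 (P, c)
    \<longleftrightarrow> (\<forall>B\<in>P. \<forall>x\<in>B. \<forall>y\<in>B. c x = c y)"
proof
  assume avoids: "\<not> contains_11_12 (P, c) \<and> \<not> contains_12_11 (P, c)"
  show "\<forall>B\<in>P. \<forall>x\<in>B. \<forall>y\<in>B. c x = c y"
  proof (intro ballI, rule ccontr)
    fix B x y assume B: "B \<in> P" "x \<in> B" "y \<in> B" and "c x \<noteq> c y"
    have "c x \<in> {1, 2}" "c y \<in> {1, 2}" using colors B by blast+
    then have "c x = 1 \<and> c y = 2 \<or> c x = 2 \<and> c y = 1" using \<open>c x \<noteq> c y\<close> by auto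
    moreover have "x < y \<or> y < x" using \<open>c x \<noteq> c y\<close> by (metis linorder_neqE_nat)
    ultimately show False
      using avoids B unfolding contains_11_12_def contains_12_11_def fst_conv snd_conv by blast
  qed
next
  assume "\<forall>B\<in>P. \<forall>x\<in>B. \<forall>y\<in>B. c x = c y"
  moreover have "(1::nat) \<noteq> 2" by simp
  ultimately show "\<not> contains_11_12 (P, c) \<and> \<not> contains_12_11 (P, c)"
    unfolding contains_11_12_def contains_12_11_def fst_conv snd_conv by metis
qed

theorem mainTheorem9:
  fixes n :: nat
  assumes "n \<ge> 1"
  shows "card {\<sigma> \<in> colored_partitions n. \<not> contains_11_12 \<sigma> \<and> \<not> contains_12_11 \<sigma>}
         = (\<Sum>k=0..n. 2 ^ k * Stirling n k)"
proof -
  have "\<not> contains_11_12 (P, c) \<and> \<not> contains_12_11 (P, c)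
      \<longleftrightarrow> (\<forall>B\<in>P. \<forall>x\<in>B. \<forall>y\<in>B. c x = c y)"
    if "partition_on {1..n} P" "c \<in> {1..n} \<rightarrow>\<^sub>E {1, 2}" for P c
    using that by (intro avoids_patterns_iff_block_constant) (auto dest: partition_onD1)
  then have avoiders: "{\<sigma> \<in> colored_partitions n. \<not> contains_11_12 \<sigma> \<and> \<not> contains_12_11 \<sigma>}
      = (SIGMA P:{P. partition_on {1..n} P}. block_constant_maps {1..n} P {1, 2})"
    unfolding colored_partitions_def block_constant_maps_def by blast
  have "card (SIGMA P:{P. partition_on {1..n} P}. block_constant_maps {1..n} P {1, 2 :: nat})
      = (\<Sum>P | partition_on {1..n} P. 2 ^ card P)"
    by (simp add: card_SigmaI finitely_many_partition_on finite_block_constant_maps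
        card_block_constant_maps numeral_2_eq_2)
  also have "\<dots> = (\<Sum>k=0..n. Stirling n k * 2 ^ k)"
    using sum_partitions_on_by_card[of "{1..n}" "\<lambda>k. (2::nat) ^ k"] by simp
  finally show ?thesis unfolding avoiders by (simp add: mult.commute)
qed

end
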